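(* Let $(\Lambda,Y)$ be an extensible graph with parameters $(t,s,\bar s)$ with $t=1$, let $y\in Y$, $Y_1=\Lambda(y,1)$, $Y_2=\Lambda(y,2)$, and $\Lambda_1,\Lambda_2$ the graphs induced by $\Lambda$ on $Y_1,Y_2$. Then: (1) The edges of $\Lambda_1$ form a partition of $Y_1$ into $s$ edges $\alpha_1=\{a'_1,a''_1\},\dots,\alpha_s=\{a'_s,a''_s\}$. (2) Letting $A'_i$ (resp. $A''_i$) be the set of points of $Y_2$ adjacent to $a'_i$ (resp. $a''_i$), for each $i$ the pair $\{A'_i,A''_i\}$ is a partition of $Y_2$ into two subsets of cardinality $\bar s=2(s-1)$. (3) $\Lambda_2$ contains no triangle. (4) Every edge of $\Lambda_2$ is contained in exactly one of the sets $A'_1,A''_1,\dots,A'_s,A''_s$, and the edges of $\Lambda_2$ contained in each of these sets form a partition of it into $s-1$ edges. (5) If $\alpha'$ and $\alpha''$ are edges of $\Lambda_2$ contained in $A'_i$ and $A''_i$ respectively, there exist uniquely determined edges $\beta',\beta''$ of $\Lambda_2$ such that $\alpha',\alpha'',\beta',\beta''$ form a square (a $4$-cycle); moreover there is a unique index $j$ such that one of $\beta',\beta''$ is contained in $A'_j$ and the other in $A''_j$.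
   Context: A finite simple graph $(\Lambda,Y)$ is extensible with parameters $(t,s,\bar s)$ (nonnegative integers) if: (1) $\Lambda$ has diameter $2$; (2) for every $y\in Y$, with $\Lambda(y,d)$ the set of vertices at distance $d$ from $y$: (a) $|\Lambda(y,1)|=2s$; (b) $|\Lambda(y,2)|=2\bar s$; (c) every $z\in\Lambda(y,1)$ is adjacent to exactly $\bar s$ points of $\Lambda(y,2)$ and exactly $t=2s-\bar s-1$ points of $\Lambda(y,1)$; (d) every $z\in\Lambda(y,2)$ is adjacent to exactly $s$ points of $\Lambda(y,2)$ and exactly $s$ points of $\Lambda(y,1)$; (3) every edge lies in exactly $t$ triangles; (4) $|Y|=1+2s+2\bar s$. *)

theory Defs
  imports Main
begin

definition simple_graph :: "'a set \<Rightarrow> ('a \<Rightarrow> 'a \<Rightarrow> bool) \<Rightarrow> bool" where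
  "simple_graph Y E \<longleftrightarrow> finite Y \<and> (\<forall>u v. E u v \<longrightarrow> u \<in> Y \<and> v \<in> Y)
     \<and> (\<forall>u v. E u v \<longrightarrow> E v u) \<and> (\<forall>u. \<not> E u u)"

definition sphere1 :: "'a set \<Rightarrow> ('a \<Rightarrow> 'a \<Rightarrow> bool) \<Rightarrow> 'a \<Rightarrow> 'a set" where
  "sphere1 Y E y = {z \<in> Y. E y z}"

definition sphere2 :: "'a set \<Rightarrow> ('a \<Rightarrow> 'a \<Rightarrow> bool) \<Rightarrow> 'a \<Rightarrow> 'a set" where
  "sphere2 Y E y = {z \<in> Y. z \<noteq> y \<and> \<not> E y z \<and> (\<exists>w \<in> Y. E y w \<and> E w z)}"

definition diameter2 :: "'a set \<Rightarrow> ('a \<Rightarrow> 'a \<Rightarrow> bool) \<Rightarrow> bool" where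
  "diameter2 Y E \<longleftrightarrow>
     (\<forall>x \<in> Y. \<forall>z \<in> Y. x = z \<or> E x z \<or> (\<exists>w \<in> Y. E x w \<and> E w z))
     \<and> (\<exists>x \<in> Y. \<exists>z \<in> Y. x \<noteq> z \<and> \<not> E x z)"

definition extensible :: "'a set \<Rightarrow> ('a \<Rightarrow> 'a \<Rightarrow> bool) \<Rightarrow> nat \<Rightarrow> nat \<Rightarrow> nat \<Rightarrow> bool" where
  "extensible Y E t s sbar \<longleftrightarrow>
     simple_graph Y E \<and>
     int t = 2 * int s - int sbar - 1 \<and>
     diameter2 Y E \<and>
     (\<forall>y \<in> Y.
        card (sphere1 Y E y) = 2 * s \<and>
        card (sphere2 Y E y) = 2 * sbar \<and>
        (\<forall>z \<in> sphere1 Y E y.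
           card {w \<in> sphere2 Y E y. E z w} = sbar \<and>
           card {w \<in> sphere1 Y E y. E z w} = t) \<and>
        (\<forall>z \<in> sphere2 Y E y.
           card {w \<in> sphere2 Y E y. E z w} = s \<and>
           card {w \<in> sphere1 Y E y. E z w} = s)) \<and>
     (\<forall>u \<in> Y. \<forall>v \<in> Y. E u v \<longrightarrow> card {w \<in> Y. E u w \<and> E v w} = t) \<and>
     card Y = 1 + 2 * s + 2 * sbar"

definition induced_edges :: "('a \<Rightarrow> 'a \<Rightarrow> bool) \<Rightarrow> 'a set \<Rightarrow> 'a set set" where
  "induced_edges E S = {{u, v} | u v. u \<in> S \<and> v \<in> S \<and> E u v}"

definition is_partition :: "'a set set \<Rightarrow> 'a set \<Rightarrow> bool" where
  "is_partition P S \<longleftrightarrow> \<Union>P = S \<and> {} \<notin> P \<and> (\<forall>e \<in> P. \<forall>f \<in> P. e \<noteq> f \<longrightarrow> e \<inter> f = {})"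

definition is_square :: "'a set set \<Rightarrow> bool" where
  "is_square Q \<longleftrightarrow> card Q = 4 \<and> (\<forall>e \<in> Q. card e = 2) \<and> card (\<Union>Q) = 4
     \<and> (\<forall>v \<in> \<Union>Q. card {e \<in> Q. v \<in> e} = 2)"

end

theory Submission
  imports Defs
begin

text \<open>
  Since t = 1, every edge lies in exactly one triangle. Hence every a in Y1 has a unique
  neighbour in Y1, and for an edge ab of Y1 the triangle on ab is aby, so A a and A b are
  disjoint and, by counting, cover Y2. For z in Y2 the apices of the triangles on the s edges
  from z to Y1 are s distinct neighbours of z in Y2, i.e. all of them: every edge of Y2 has its
  apex in Y1. So Y2 is triangle-free, each edge of Y2 lies in a unique A a, and inside A a every
  w has exactly one neighbour (the apex of aw), which gives the matchings. A point u of A a has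
  s - 1 neighbours in A b and, by triangle-freeness, at most one in each of the s - 1 edges of
  A b, hence exactly one in each. Thus two edges in A a and A b are joined by exactly one of
  their two perfect matchings, which closes the unique square, and its two new edges lie in
  A c and A d for the edge cd of Y1 through the apex of either of them.
\<close>

lemma is_square_4cycle:
  assumes "distinct [u1, u2, v2, v1]"
  shows "is_square {{u1,u2},{v1,v2},{u1,v1},{u2,v2}}"
proof -
  let ?Q = "{{u1,u2},{v1,v2},{u1,v1},{u2,v2}}"
  have d: "u1 \<noteq> u2" "v1 \<noteq> v2" "u1 \<noteq> v1" "u1 \<noteq> v2" "u2 \<noteq> v1" "u2 \<noteq> v2"
    using assms by auto
  have "{e \<in> ?Q. u1 \<in> e} = {{u1,u2},{u1,v1}}" "{e \<in> ?Q. u2 \<in> e} = {{u1,u2},{u2,v2}}"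
    "{e \<in> ?Q. v1 \<in> e} = {{v1,v2},{u1,v1}}" "{e \<in> ?Q. v2 \<in> e} = {{v1,v2},{u2,v2}}"
    using d by auto
  then have "\<forall>v \<in> {u1,u2,v1,v2}. card {e \<in> ?Q. v \<in> e} = 2"
    using d by (auto simp: doubleton_eq_iff)
  moreover have "\<Union>?Q = {u1,u2,v1,v2}" by blast
  ultimately show ?thesis using d unfolding is_square_def by (simp add: doubleton_eq_iff)
qed

lemma is_square_completion:
  assumes "distinct [u1, u2, v2, v1]" and "card B = 2"
    and sq: "is_square ({{u1,u2},{v1,v2}} \<union> B)"
  shows "B = {{u1,v1},{u2,v2}} \<or> B = {{u1,v2},{u2,v1}}"
proof -
  let ?\<alpha> = "{{u1,u2},{v1,v2}}"
  let ?Q = "?\<alpha> \<union> B"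
  have d: "u1 \<noteq> u2" "v1 \<noteq> v2" "u1 \<noteq> v1" "u1 \<noteq> v2" "u2 \<noteq> v1" "u2 \<noteq> v2"
    using assms(1) by auto
  obtain b1 b2 where B: "B = {b1,b2}" "b1 \<noteq> b2" using \<open>card B = 2\<close> card_2_iff by metis
  have fresh: "b \<notin> ?\<alpha>" if "b \<in> B" for b
  proof
    assume "b \<in> ?\<alpha>"
    then have "?Q = ?\<alpha> \<union> (B - {b})" by blast
    then have "card ?Q \<le> card ?\<alpha> + card (B - {b})" by (metis card_Un_le)
    also have "\<dots> \<le> 3" using that \<open>card B = 2\<close> by (simp add: card_insert_if)
    finally show False using sq by (simp add: is_square_def)
  qed
  have vertices: "\<Union>?Q = {u1,u2,v1,v2}"
  proof (rule card_subset_eq[symmetric])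
    have Q4: "card (\<Union>?Q) = 4" using sq by (simp only: is_square_def)
    then show "finite (\<Union>?Q)" by (metis card.infinite zero_neq_numeral)
    have "card {u1,u2,v1,v2} = 4" using d by auto
    with Q4 show "card {u1,u2,v1,v2} = card (\<Union>?Q)" by (metis)
  qed blast
  have cross: "b \<in> {{u1,v1},{u1,v2},{u2,v1},{u2,v2}}" if "b \<in> B" for b
  proof -
    have "card b = 2" using sq that unfolding is_square_def by blast
    then obtain p q where pq: "b = {p,q}" "p \<noteq> q" by (meson card_2_iff)
    have "p \<in> {u1,u2,v1,v2}" "q \<in> {u1,u2,v1,v2}" using vertices that pq by blast+
    then show ?thesis using fresh[OF that] d pq by (auto simp: doubleton_eq_iff)
  qed
  have disjoint: "b1 \<inter> b2 = {}"
  proof (rule ccontr)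
    assume "b1 \<inter> b2 \<noteq> {}"
    then obtain v where v: "v \<in> b1" "v \<in> b2" by blast
    then obtain \<alpha> where \<alpha>: "\<alpha> \<in> ?\<alpha>" "v \<in> \<alpha>" using vertices B by blast
    have "\<alpha> \<noteq> b1" "\<alpha> \<noteq> b2" using fresh \<alpha>(1) B(1) by blast+
    then have "3 = card {\<alpha>, b1, b2}" using B(2) by simp
    also have "\<dots> \<le> card {e \<in> ?Q. v \<in> e}"
      by (rule card_mono) (use \<alpha> v B in auto)
    also have "\<dots> = 2" using sq v B unfolding is_square_def by blast
    finally show False by simp
  qed
  have "b1 = {u1,v1} \<or> b1 = {u1,v2} \<or> b1 = {u2,v1} \<or> b1 = {u2,v2}"
    "b2 = {u1,v1} \<or> b2 = {u1,v2} \<or> b2 = {u2,v1} \<or> b2 = {u2,v2}" using cross B(1) by blast+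
  with d disjoint show ?thesis unfolding B(1) by (elim disjE) (simp_all add: insert_commute)
qed

lemma doubleton_in_induced_edges_iff:
  assumes "\<And>u v. E u v \<Longrightarrow> E v u"
  shows "{p, q} \<in> induced_edges E S \<longleftrightarrow> p \<in> S \<and> q \<in> S \<and> E p q"
  using assms unfolding induced_edges_def by (auto simp: doubleton_eq_iff)

lemma induced_edges_restrict:
  assumes "T \<subseteq> S"
  shows "{e \<in> induced_edges E S. e \<subseteq> T} = induced_edges E T"
  using assms unfolding induced_edges_def by auto

lemma induced_edges_perfect_matching:
  assumes "finite S" and sym: "\<And>u v. E u v \<Longrightarrow> E v u" and irrefl: "\<And>u. \<not> E u u"
    and partner: "\<And>w. w \<in> S \<Longrightarrow> \<exists>!w'. w' \<in> S \<and> E w w'"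
  shows "is_partition (induced_edges E S) S" and "2 * card (induced_edges E S) = card S"
proof -
  let ?M = "induced_edges E S"
  have sub: "?M \<subseteq> Pow S" unfolding induced_edges_def by blast
  have edge_eq: "e = f" if "e \<in> ?M" "f \<in> ?M" "x \<in> e" "x \<in> f" for e f x
  proof -
    have "x \<in> S" using that(1,3) sub by blast
    then obtain w where w: "w \<in> S" "E x w" "\<And>w'. w' \<in> S \<Longrightarrow> E x w' \<Longrightarrow> w' = w"
      using partner by blast
    have edge_form: "g = {x, w}" if "g \<in> ?M" "x \<in> g" for g
      using that w sym unfolding induced_edges_def by blast
    show "e = f" using edge_form[OF that(1,3)] edge_form[OF that(2,4)] by simp
  qed
  have "\<Union>?M = S"
  proof
    show "S \<subseteq> \<Union>?M"
    proof
      fix w assume "w \<in> S"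
      then obtain w' where "w' \<in> S" "E w w'" using partner by blast
      with \<open>w \<in> S\<close> have "{w, w'} \<in> ?M" unfolding induced_edges_def by blast
      then show "w \<in> \<Union>?M" by blast
    qed
  qed (use sub in blast)
  moreover have disjoint: "pairwise disjnt ?M"
    using edge_eq unfolding pairwise_def disjnt_def by blast
  moreover have "{} \<notin> ?M" unfolding induced_edges_def by blast
  ultimately show "is_partition ?M S"
    unfolding is_partition_def pairwise_def disjnt_def by blast
  have "card e = 2" if "e \<in> ?M" for e
  proof -
    obtain u v where "e = {u, v}" "E u v" using \<open>e \<in> ?M\<close> unfolding induced_edges_def by blast
    then show ?thesis using irrefl[of u] by (cases "u = v") auto
  qed
  then have "sum card ?M = 2 * card ?M" by simp
  also have "sum card ?M = card (\<Union>?M)"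
    using disjoint sub \<open>finite S\<close> by (intro card_Union_disjoint[symmetric]) (auto intro: rev_finite_subset)
  finally show "2 * card ?M = card S" using \<open>\<Union>?M = S\<close> by simp
qed

lemma partition_block_unique:
  assumes "is_partition P S" "e \<in> P" "f \<in> P" "x \<in> e" "x \<in> f"
  shows "e = f"
  using assms unfolding is_partition_def by blast

lemma card_le_card_blocks_meeting:
  assumes "is_partition P S" "finite P" "N \<subseteq> S" "\<And>e. e \<in> P \<Longrightarrow> card (N \<inter> e) \<le> 1"
  shows "card N \<le> card {e \<in> P. N \<inter> e \<noteq> {}}"
proof -
  let ?P = "{e \<in> P. N \<inter> e \<noteq> {}}"
  have "N = (\<Union>e \<in> ?P. N \<inter> e)" using assms(1,3) unfolding is_partition_def by blast
  then have "card N = card (\<Union>e \<in> ?P. N \<inter> e)" by (rule arg_cong)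
  also have "\<dots> \<le> (\<Sum>e \<in> ?P. card (N \<inter> e))" using assms(2) by (intro card_UN_le) simp
  also have "\<dots> \<le> (\<Sum>e \<in> ?P. 1)" by (rule sum_mono) (use assms(4) in blast)
  finally show ?thesis by simp
qed

locale extensible_t1 =
  fixes Y :: "'a set" and E :: "'a \<Rightarrow> 'a \<Rightarrow> bool" and s sbar :: nat and y :: 'a
  assumes extensible: "extensible Y E 1 s sbar" and y_in_Y: "y \<in> Y"
begin

abbreviation Y1 :: "'a set" where "Y1 \<equiv> sphere1 Y E y"
abbreviation Y2 :: "'a set" where "Y2 \<equiv> sphere2 Y E y"
abbreviation A :: "'a \<Rightarrow> 'a set" where "A a \<equiv> {z \<in> sphere2 Y E y. E a z}"

lemma edge_in_Y: "E u v \<Longrightarrow> u \<in> Y" "E u v \<Longrightarrow> v \<in> Y"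
  and edge_sym: "E u v \<Longrightarrow> E v u"
  and not_edge_self: "\<not> E u u"
  and finite_Y: "finite Y"
  using extensible unfolding extensible_def simple_graph_def by blast+

lemma sbar_eq: "sbar = 2 * (s - 1)"
proof -
  have "int 1 = 2 * int s - int sbar - 1" using extensible unfolding extensible_def by blast
  then show ?thesis by linarith
qed

lemma local_counts:
  "card Y1 = 2 * s" "card Y2 = 2 * sbar"
  "a \<in> Y1 \<Longrightarrow> card (A a) = sbar" "a \<in> Y1 \<Longrightarrow> card {w \<in> Y1. E a w} = 1"
  "z \<in> Y2 \<Longrightarrow> card {w \<in> Y2. E z w} = s" "z \<in> Y2 \<Longrightarrow> card {w \<in> Y1. E z w} = s"
  using extensible y_in_Y unfolding extensible_def by blast+

text \<open>This is where t = 1 enters.\<close>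
lemma unique_common_neighbour:
  assumes "E u v"
  shows "\<exists>!w. E u w \<and> E v w"
proof -
  have "\<forall>u \<in> Y. \<forall>v \<in> Y. E u v \<longrightarrow> card {w \<in> Y. E u w \<and> E v w} = 1"
    using extensible unfolding extensible_def by (elim conjE)
  then have "card {w \<in> Y. E u w \<and> E v w} = 1" using assms edge_in_Y by blast
  then obtain c where c: "{w \<in> Y. E u w \<and> E v w} = {c}" by (rule card_1_singletonE)
  show ?thesis
  proof (rule ex1I)
    show "E u c \<and> E v c" using c by blast
    show "w = c" if "E u w \<and> E v w" for w using c that edge_in_Y by blast
  qed
qed

lemma common_neighbour_eq: "E u v \<Longrightarrow> E u w \<Longrightarrow> E v w \<Longrightarrow> E u w' \<Longrightarrow> E v w' \<Longrightarrow> w = w'"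
  using unique_common_neighbour by blast

lemma finite_Y1: "finite Y1" and finite_Y2: "finite Y2"
  using finite_Y unfolding sphere1_def sphere2_def by simp_all

lemma Y1_Y2_disjoint: "Y1 \<inter> Y2 = {}"
  unfolding sphere1_def sphere2_def by blast

lemma centre_notin_Y2: "y \<notin> Y2"
  unfolding sphere2_def by blast

lemma vertex_cases:
  assumes "z \<in> Y"
  shows "z = y \<or> z \<in> Y1 \<or> z \<in> Y2"
proof -
  have "diameter2 Y E" using extensible unfolding extensible_def by (elim conjE)
  then have "y = z \<or> E y z \<or> (\<exists>w \<in> Y. E y w \<and> E w z)"
    using y_in_Y assms unfolding diameter2_def by blast
  then show ?thesis using assms unfolding sphere1_def sphere2_def by auto
qed

lemma unique_partner_in_Y1:
  assumes "a \<in> Y1"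
  shows "\<exists>!b. b \<in> Y1 \<and> E a b"
proof -
  obtain b where "{w \<in> Y1. E a w} = {b}" using local_counts(4)[OF assms] by (rule card_1_singletonE)
  then show ?thesis by (auto simp: set_eq_iff)
qed

lemma A_disjoint:
  assumes "a \<in> Y1" "b \<in> Y1" "E a b"
  shows "A a \<inter> A b = {}"
proof -
  have "E a y" "E b y" using assms edge_sym unfolding sphere1_def by blast+
  then show ?thesis
    using assms(3) common_neighbour_eq centre_notin_Y2 by blast
qed

lemma A_union:
  assumes "a \<in> Y1" "b \<in> Y1" "E a b"
  shows "A a \<union> A b = Y2"
proof (rule card_subset_eq[OF finite_Y2])
  have "card (A a \<union> A b) = card (A a) + card (A b)"
    using finite_Y2 A_disjoint[OF assms] by (intro card_Un_disjoint) simp_all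
  then show "card (A a \<union> A b) = card Y2" using local_counts assms by simp
qed blast

lemma third_vertex_in_A:
  assumes "a \<in> Y1" "z \<in> A a" "E a w" "E z w"
  shows "w \<in> A a"
proof -
  have "w \<notin> Y1"
  proof
    assume "w \<in> Y1"
    then have "z \<in> A a \<inter> A w" using assms edge_sym by blast
    then show False using A_disjoint[OF assms(1) \<open>w \<in> Y1\<close> assms(3)] by blast
  qed
  moreover have "w \<noteq> y" using assms(2,4) edge_sym unfolding sphere2_def by blast
  ultimately show ?thesis using vertex_cases edge_in_Y assms(3) by blast
qed

lemma Y1_matching: "is_partition (induced_edges E Y1) Y1" "card (induced_edges E Y1) = s"
  using induced_edges_perfect_matching[OF finite_Y1 edge_sym not_edge_self unique_partner_in_Y1]
    local_counts(1) by simp_all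

lemma Y2_edge_common_neighbour_in_Y1:
  assumes "z \<in> Y2" "w \<in> Y2" "E z w"
  shows "\<exists>a \<in> Y1. E z a \<and> E w a"
proof -
  let ?N1 = "{a \<in> Y1. E z a}" and ?N2 = "{c \<in> Y2. E z c}"
  define apex where "apex a = (THE c. E z c \<and> E a c)" for a
  have apex: "E z (apex a) \<and> E a (apex a)" if "E z a" for a
    unfolding apex_def using theI'[OF unique_common_neighbour[OF that]] .
  have "apex ` ?N1 \<subseteq> ?N2"
  proof
    fix c assume "c \<in> apex ` ?N1"
    then obtain a where a: "a \<in> Y1" "E z a" "c = apex a" by blast
    then have "c \<in> A a" using third_vertex_in_A[of a z c] apex[of a] assms(1) edge_sym by blast
    then show "c \<in> ?N2" using a apex[of a] by blast
  qed
  moreover have "inj_on apex ?N1"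
  proof (rule inj_onI)
    fix a a' assume "a \<in> ?N1" "a' \<in> ?N1" "apex a = apex a'"
    then show "a = a'"
      using apex[of a] apex[of a'] common_neighbour_eq[of z "apex a" a a'] edge_sym by auto
  qed
  then have "card (apex ` ?N1) = card ?N2"
    using local_counts(5,6)[OF assms(1)] by (simp add: card_image)
  ultimately have "apex ` ?N1 = ?N2" using finite_Y2 by (intro card_subset_eq) auto
  then obtain a where "a \<in> ?N1" "w = apex a" using assms by blast
  then show ?thesis using apex[of a] edge_sym by blast
qed

lemma Y2_edge_apex_in_Y1:
  assumes "z \<in> Y2" "w \<in> Y2" "E z w" "E z c" "E w c"
  shows "c \<in> Y1"
  using Y2_edge_common_neighbour_in_Y1[OF assms(1-3)] common_neighbour_eq[OF assms(3)] assms(4,5)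
  by blast

lemma Y2_edge_apex_notin_Y2:
  assumes "u \<in> Y2" "v \<in> Y2" "E u v" "E u w" "E v w"
  shows "w \<notin> Y2"
  using Y2_edge_apex_in_Y1[OF assms] Y1_Y2_disjoint by blast

lemma Y2_triangle_free: "\<not> (\<exists>u \<in> Y2. \<exists>v \<in> Y2. \<exists>w \<in> Y2. E u v \<and> E v w \<and> E u w)"
proof clarify
  fix u v w assume "u \<in> Y2" "v \<in> Y2" "w \<in> Y2" "E u v" "E v w" "E u w"
  then show False using Y2_edge_apex_notin_Y2[of u v w] by blast
qed

lemma unique_partner_in_A:
  assumes "a \<in> Y1" "w \<in> A a"
  shows "\<exists>!w'. w' \<in> A a \<and> E w w'"
proof -
  obtain c where c: "E a c" "E w c" using unique_common_neighbour[of a w] assms by blast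
  show ?thesis
  proof (rule ex1I)
    show "c \<in> A a \<and> E w c" using third_vertex_in_A[OF assms c] c by blast
    show "w' = c" if "w' \<in> A a \<and> E w w'" for w'
      using that c assms common_neighbour_eq[of a w w' c] by blast
  qed
qed

lemma A_matching:
  assumes "a \<in> Y1"
  shows "is_partition (induced_edges E (A a)) (A a)" "card (induced_edges E (A a)) = s - 1"
proof -
  have "finite (A a)" using finite_Y2 by simp
  note matching = induced_edges_perfect_matching[OF this edge_sym not_edge_self
      unique_partner_in_A[OF assms]]
  show "is_partition (induced_edges E (A a)) (A a)" by (rule matching(1))
  show "card (induced_edges E (A a)) = s - 1"
    using matching(2) local_counts(3)[OF assms] sbar_eq by simp
qed

lemma Y2_edges_in_A_matching:
  assumes "a \<in> Y1"
  shows "is_partition {e \<in> induced_edges E Y2. e \<subseteq> A a} (A a)"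
    "card {e \<in> induced_edges E Y2. e \<subseteq> A a} = s - 1"
proof -
  have "{e \<in> induced_edges E Y2. e \<subseteq> A a} = induced_edges E (A a)"
    by (rule induced_edges_restrict) blast
  then show "is_partition {e \<in> induced_edges E Y2. e \<subseteq> A a} (A a)"
    "card {e \<in> induced_edges E Y2. e \<subseteq> A a} = s - 1"
    using A_matching[OF assms] by simp_all
qed

lemma Y2_edge_in_A:
  assumes "e \<in> induced_edges E Y2"
  obtains a where "a \<in> Y1" "e \<subseteq> A a"
proof -
  obtain u v where e: "e = {u, v}" "u \<in> Y2" "v \<in> Y2" "E u v"
    using assms unfolding induced_edges_def by blast
  then obtain a where "a \<in> Y1" "E u a" "E v a" using Y2_edge_common_neighbour_in_Y1 by blast
  then show thesis using that e edge_sym by blast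
qed

lemma A_containing_Y2_edge_eq:
  assumes "e \<in> induced_edges E Y2" "e \<subseteq> A a" "e \<subseteq> A b"
  shows "a = b"
proof -
  obtain u v where e: "e = {u, v}" "E u v"
    using assms(1) unfolding induced_edges_def by blast
  then show ?thesis using assms(2,3) common_neighbour_eq[of u v a b] edge_sym by auto
qed

lemma Y2_edge_in_unique_A:
  assumes "e \<in> induced_edges E Y2"
  shows "\<exists>!a. a \<in> Y1 \<and> e \<subseteq> A a"
proof -
  obtain a where "a \<in> Y1" "e \<subseteq> A a" using Y2_edge_in_A[OF assms] .
  then show ?thesis using A_containing_Y2_edge_eq[OF assms] by (intro ex1I[of _ a]) auto
qed

lemma card_neighbours_in_partner_A:
  assumes "a \<in> Y1" "b \<in> Y1" "E a b" "u \<in> A a"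
  shows "card {w \<in> A b. E u w} = s - 1"
proof -
  obtain w' where "w' \<in> A a" "E u w'" "\<And>w. w \<in> A a \<Longrightarrow> E u w \<Longrightarrow> w = w'"
    using unique_partner_in_A[OF assms(1,4)] by blast
  then have "{w \<in> A a. E u w} = {w'}" by blast
  moreover have "{w \<in> Y2. E u w} = {w \<in> A a. E u w} \<union> {w \<in> A b. E u w}"
    using A_union[OF assms(1-3)] by blast
  moreover have "{w \<in> A a. E u w} \<inter> {w \<in> A b. E u w} = {}"
    using A_disjoint[OF assms(1-3)] by blast
  moreover have "finite {w \<in> A b. E u w}" using finite_Y2 by simp
  ultimately have "card {w \<in> Y2. E u w} = 1 + card {w \<in> A b. E u w}"
    by (simp add: card_Un_disjoint)
  then show ?thesis using local_counts(5) assms(4) by simp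
qed

lemma A_edge_meets_neighbour:
  assumes ab: "a \<in> Y1" "b \<in> Y1" "E a b" and "u \<in> A a"
    and v: "v1 \<in> A b" "v2 \<in> A b" "E v1 v2"
  shows "E u v1 \<or> E u v2"
proof (rule ccontr)
  assume "\<not> (E u v1 \<or> E u v2)"
  let ?P = "induced_edges E (A b)" and ?N = "{w \<in> A b. E u w}"
  have "{v1, v2} \<in> ?P" using v unfolding induced_edges_def by blast
  have "?P \<subseteq> Pow (A b)" unfolding induced_edges_def by blast
  then have "finite ?P" using finite_Y2 by (simp add: finite_subset)
  have at_most_one: "card (?N \<inter> e) \<le> 1" if "e \<in> ?P" for e
  proof -
    from \<open>e \<in> ?P\<close> obtain p q where e: "e = {p, q}" "p \<in> A b" "q \<in> A b" "E p q"
      unfolding induced_edges_def by blast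
    have "\<not> (E u p \<and> E u q)"
    proof
      assume "E u p \<and> E u q"
      then have "u \<notin> Y2" using Y2_edge_apex_notin_Y2[of p q u] e edge_sym by blast
      then show False using \<open>u \<in> A a\<close> by blast
    qed
    then have "?N \<inter> e \<subseteq> {p} \<or> ?N \<inter> e \<subseteq> {q}" unfolding e(1) by blast
    then show ?thesis using card_mono[of "{p}" "?N \<inter> e"] card_mono[of "{q}" "?N \<inter> e"] by auto
  qed
  have "card ?N \<le> card {e \<in> ?P. ?N \<inter> e \<noteq> {}}"
    by (rule card_le_card_blocks_meeting[OF A_matching(1)[OF ab(2)] \<open>finite ?P\<close> _ at_most_one])
      blast
  also have "\<dots> \<le> card (?P - {{v1, v2}})"
  proof (rule card_mono)
    show "finite (?P - {{v1, v2}})" using \<open>finite ?P\<close> by simp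
    show "{e \<in> ?P. ?N \<inter> e \<noteq> {}} \<subseteq> ?P - {{v1, v2}}" using \<open>\<not> (E u v1 \<or> E u v2)\<close> by blast
  qed
  also have "\<dots> < card ?P"
    using \<open>{v1, v2} \<in> ?P\<close> \<open>finite ?P\<close> by (meson card_Diff1_less)
  finally show False
    using card_neighbours_in_partner_A[OF ab \<open>u \<in> A a\<close>] A_matching(2)[OF ab(2)] by simp
qed

lemma A_edges_matched:
  assumes ab: "a \<in> Y1" "b \<in> Y1" "E a b"
    and u: "u1 \<in> A a" "u2 \<in> A a" "E u1 u2" and v: "v1 \<in> A b" "v2 \<in> A b" "E v1 v2"
  shows "(E u1 v1 \<and> E u2 v2) \<or> (E u1 v2 \<and> E u2 v1)"
proof -
  have "\<not> (E u1 v \<and> E u2 v)" if "v \<in> Y2" for v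
    using Y2_edge_apex_notin_Y2[of u1 u2 v] u that by blast
  then show ?thesis
    using A_edge_meets_neighbour[OF ab u(1) v] A_edge_meets_neighbour[OF ab u(2) v] v by blast
qed

lemma square_completion_in_Y2:
  assumes ab: "a \<in> Y1" "b \<in> Y1" "E a b"
    and u: "u1 \<in> A a" "u2 \<in> A a" "E u1 u2" and v: "v1 \<in> A b" "v2 \<in> A b" "E v1 v2"
    and uv: "E u1 v1" "E u2 v2"
  shows "B \<subseteq> induced_edges E Y2 \<and> card B = 2 \<and> is_square ({{u1, u2}, {v1, v2}} \<union> B)
    \<longleftrightarrow> B = {{u1, v1}, {u2, v2}}"
proof -
  have "u1 \<noteq> u2" "v1 \<noteq> v2" using u(3) v(3) not_edge_self by blast+
  moreover have "{u1, u2} \<inter> {v1, v2} = {}" using A_disjoint[OF ab] u v by blast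
  ultimately have d: "distinct [u1, u2, v2, v1]" by auto
  note edge_iff = doubleton_in_induced_edges_iff[of E, OF edge_sym]
  show ?thesis
  proof
    assume B: "B \<subseteq> induced_edges E Y2 \<and> card B = 2 \<and> is_square ({{u1, u2}, {v1, v2}} \<union> B)"
    have "B \<noteq> {{u1, v2}, {u2, v1}}"
    proof
      assume "B = {{u1, v2}, {u2, v1}}"
      then have "{u1, v2} \<in> induced_edges E Y2" using B by blast
      then have "E u1 v2" using edge_iff by blast
      then have "u1 \<notin> Y2"
        using Y2_edge_apex_notin_Y2[of v1 v2 u1] v uv(1) edge_sym by blast
      then show False using u by blast
    qed
    then show "B = {{u1, v1}, {u2, v2}}" using is_square_completion[OF d] B by blast
  next
    assume B: "B = {{u1, v1}, {u2, v2}}"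
    have "{{u1, u2}, {v1, v2}} \<union> B = {{u1, u2}, {v1, v2}, {u1, v1}, {u2, v2}}"
      unfolding B by (simp only: Un_insert_left Un_empty_left)
    then have "is_square ({{u1, u2}, {v1, v2}} \<union> B)" using is_square_4cycle[OF d] by simp
    moreover have "B \<subseteq> induced_edges E Y2" using edge_iff u v uv B by simp
    moreover have "card B = 2" using d B by (auto simp: doubleton_eq_iff)
    ultimately show "B \<subseteq> induced_edges E Y2 \<and> card B = 2 \<and> is_square ({{u1, u2}, {v1, v2}} \<union> B)"
      by blast
  qed
qed

lemma square_edges_in_partner_As:
  assumes ab: "a \<in> Y1" "b \<in> Y1" "E a b"
    and u: "u1 \<in> A a" "u2 \<in> A a" "E u1 u2" and v: "v1 \<in> A b" "v2 \<in> A b" "E v1 v2"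
    and "E u1 v1" "E u2 v2"
  obtains c d where "c \<in> Y1" "d \<in> Y1" "E c d" "{u1, v1} \<subseteq> A c" "{u2, v2} \<subseteq> A d"
proof -
  note edge_iff = doubleton_in_induced_edges_iff[of E, OF edge_sym]
  have "{u1, v1} \<in> induced_edges E Y2" using edge_iff u v \<open>E u1 v1\<close> by blast
  then obtain c where c: "c \<in> Y1" "{u1, v1} \<subseteq> A c" using Y2_edge_in_A by blast
  obtain d where d: "d \<in> Y1" "E c d" using unique_partner_in_Y1[OF c(1)] by blast
  have "u2 \<notin> A c"
  proof
    assume "u2 \<in> A c"
    then have "{u1, u2} \<subseteq> A c" "{u1, u2} \<subseteq> A a" using c(2) u(1,2) by blast+
    moreover have "{u1, u2} \<in> induced_edges E Y2" using edge_iff u by blast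
    ultimately have "c = a" by (intro A_containing_Y2_edge_eq)
    then show False using c(2) v(1) A_disjoint[OF ab] by blast
  qed
  moreover have "v2 \<notin> A c"
  proof
    assume "v2 \<in> A c"
    then have "{v1, v2} \<subseteq> A c" "{v1, v2} \<subseteq> A b" using c(2) v(1,2) by blast+
    moreover have "{v1, v2} \<in> induced_edges E Y2" using edge_iff v by blast
    ultimately have "c = b" by (intro A_containing_Y2_edge_eq)
    then show False using c(2) u(1) A_disjoint[OF ab] by blast
  qed
  moreover have "u2 \<in> Y2" "v2 \<in> Y2" using u(2) v(2) by blast+
  ultimately have "{u2, v2} \<subseteq> A d" using A_union[OF c(1) d] by blast
  then show thesis using that[OF c(1) d c(2)] by blast
qed

lemma square_through_A_edges:
  assumes ab: "a \<in> Y1" "b \<in> Y1" "E a b"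
    and \<alpha>: "\<alpha>1 \<in> induced_edges E Y2" "\<alpha>2 \<in> induced_edges E Y2" "\<alpha>1 \<subseteq> A a" "\<alpha>2 \<subseteq> A b"
  shows "\<exists>!B. B \<subseteq> induced_edges E Y2 \<and> card B = 2 \<and> is_square ({\<alpha>1, \<alpha>2} \<union> B)"
    and "B \<subseteq> induced_edges E Y2 \<Longrightarrow> card B = 2 \<Longrightarrow> is_square ({\<alpha>1, \<alpha>2} \<union> B) \<Longrightarrow>
      \<exists>!\<gamma>. \<gamma> \<in> induced_edges E Y1 \<and>
        (\<exists>c d \<beta>1 \<beta>2. \<gamma> = {c, d} \<and> B = {\<beta>1, \<beta>2} \<and> \<beta>1 \<subseteq> A c \<and> \<beta>2 \<subseteq> A d)"
proof -
  obtain u1 u2 where u: "\<alpha>1 = {u1, u2}" "u1 \<in> A a" "u2 \<in> A a" "E u1 u2"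
    using \<alpha>(1,3) unfolding induced_edges_def by blast
  obtain v1 v2 where v: "\<alpha>2 = {v1, v2}" "v1 \<in> A b" "v2 \<in> A b" "E v1 v2" "E u1 v1" "E u2 v2"
  proof -
    obtain p q where pq: "\<alpha>2 = {p, q}" "p \<in> A b" "q \<in> A b" "E p q"
      using \<alpha>(2,4) unfolding induced_edges_def by blast
    from A_edges_matched[OF ab u(2-4) pq(2-4)] show thesis
    proof
      assume "E u1 p \<and> E u2 q"
      then show thesis using that pq by blast
    next
      assume "E u1 q \<and> E u2 p"
      moreover have "\<alpha>2 = {q, p}" using pq(1) by blast
      ultimately show thesis using that pq edge_sym by blast
    qed
  qed
  note square_iff = square_completion_in_Y2[OF ab u(2-4) v(2-6)]
  show "\<exists>!B. B \<subseteq> induced_edges E Y2 \<and> card B = 2 \<and> is_square ({\<alpha>1, \<alpha>2} \<union> B)"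
    unfolding u(1) v(1) square_iff by blast
  assume "B \<subseteq> induced_edges E Y2" "card B = 2" "is_square ({\<alpha>1, \<alpha>2} \<union> B)"
  then have B: "B = {{u1, v1}, {u2, v2}}" using square_iff u(1) v(1) by blast
  obtain c d where cd: "c \<in> Y1" "d \<in> Y1" "E c d" "{u1, v1} \<subseteq> A c" "{u2, v2} \<subseteq> A d"
    using square_edges_in_partner_As[OF ab u(2-4) v(2-6)] .
  note edge_iff = doubleton_in_induced_edges_iff[of E, OF edge_sym]
  have cd_edge: "{c, d} \<in> induced_edges E Y1" using edge_iff cd by blast
  show "\<exists>!\<gamma>. \<gamma> \<in> induced_edges E Y1 \<and>
      (\<exists>c d \<beta>1 \<beta>2. \<gamma> = {c, d} \<and> B = {\<beta>1, \<beta>2} \<and> \<beta>1 \<subseteq> A c \<and> \<beta>2 \<subseteq> A d)"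
  proof (rule ex1I)
    show "{c, d} \<in> induced_edges E Y1 \<and>
      (\<exists>c' d' \<beta>1 \<beta>2. {c, d} = {c', d'} \<and> B = {\<beta>1, \<beta>2} \<and> \<beta>1 \<subseteq> A c' \<and> \<beta>2 \<subseteq> A d')"
      using cd_edge B cd by blast
  next
    fix \<gamma> assume "\<gamma> \<in> induced_edges E Y1 \<and>
      (\<exists>c d \<beta>1 \<beta>2. \<gamma> = {c, d} \<and> B = {\<beta>1, \<beta>2} \<and> \<beta>1 \<subseteq> A c \<and> \<beta>2 \<subseteq> A d)"
    then obtain c' d' \<beta>1 \<beta>2 where \<gamma>: "\<gamma> \<in> induced_edges E Y1" "\<gamma> = {c', d'}"
      and \<beta>1: "\<beta>1 \<in> B" "\<beta>1 \<subseteq> A c'" by blast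
    have "c' \<in> Y1" using \<gamma> unfolding induced_edges_def by (auto simp: doubleton_eq_iff)
    have "{u1, v1} \<in> induced_edges E Y2" "{u2, v2} \<in> induced_edges E Y2"
      using edge_iff u v by blast+
    then have "c' = c \<or> c' = d"
      using \<beta>1 B A_containing_Y2_edge_eq \<open>c' \<in> Y1\<close> cd by blast
    then show "\<gamma> = {c, d}"
      using partition_block_unique[OF Y1_matching(1) \<gamma>(1) cd_edge, of c'] \<gamma>(2) by blast
  qed
qed

end

theorem proposition7:
  fixes Y :: "'a set" and E :: "'a \<Rightarrow> 'a \<Rightarrow> bool" and t s sbar :: nat and y :: 'a
  assumes ext: "extensible Y E t s sbar"
    and t1: "t = 1"
    and yY: "y \<in> Y"
  defines "Y1 \<equiv> sphere1 Y E y"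
    and "Y2 \<equiv> sphere2 Y E y"
    and "E1 \<equiv> induced_edges E (sphere1 Y E y)"
    and "E2 \<equiv> induced_edges E (sphere2 Y E y)"
    and "A \<equiv> (\<lambda>a. {z \<in> sphere2 Y E y. E a z})"
  shows
    \<comment> \<open>(1)\<close>
    "(is_partition E1 Y1 \<and> card E1 = s)
     \<comment> \<open>(2)\<close>
     \<and> (\<forall>a \<in> Y1. \<forall>b \<in> Y1. E a b \<longrightarrow>
          A a \<union> A b = Y2 \<and> A a \<inter> A b = {} \<and>
          card (A a) = sbar \<and> card (A b) = sbar \<and> sbar = 2 * (s - 1))
     \<comment> \<open>(3)\<close>
     \<and> \<not> (\<exists>u \<in> Y2. \<exists>v \<in> Y2. \<exists>w \<in> Y2. E u v \<and> E v w \<and> E u w)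
     \<comment> \<open>(4)\<close>
     \<and> (\<forall>e \<in> E2. \<exists>!a. a \<in> Y1 \<and> e \<subseteq> A a)
     \<and> (\<forall>a \<in> Y1. is_partition {e \<in> E2. e \<subseteq> A a} (A a)
                 \<and> card {e \<in> E2. e \<subseteq> A a} = s - 1)
     \<comment> \<open>(5)\<close>
     \<and> (\<forall>a \<in> Y1. \<forall>b \<in> Y1. \<forall>\<alpha>1 \<in> E2. \<forall>\<alpha>2 \<in> E2.
          E a b \<and> \<alpha>1 \<subseteq> A a \<and> \<alpha>2 \<subseteq> A b \<longrightarrow>
          (\<exists>!B. B \<subseteq> E2 \<and> card B = 2 \<and> is_square ({\<alpha>1, \<alpha>2} \<union> B))
          \<and> (\<forall>B. B \<subseteq> E2 \<and> card B = 2 \<and> is_square ({\<alpha>1, \<alpha>2} \<union> B) \<longrightarrow>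
               (\<exists>!\<gamma>. \<gamma> \<in> E1 \<and> (\<exists>c d \<beta>1 \<beta>2. \<gamma> = {c, d} \<and> B = {\<beta>1, \<beta>2}
                                     \<and> \<beta>1 \<subseteq> A c \<and> \<beta>2 \<subseteq> A d))))"
proof -
  interpret extensible_t1 Y E s sbar y
    using ext yY unfolding t1 by unfold_locales
  show ?thesis
    unfolding Y1_def Y2_def E1_def E2_def A_def
  proof (intro conjI ballI allI impI, goal_cases)
    case 1 show ?case by (rule Y1_matching(1))
  next
    case 2 show ?case by (rule Y1_matching(2))
  next
    case 3 then show ?case by (rule A_union)
  next
    case 4 then show ?case by (rule A_disjoint)
  next
    case 5 then show ?case by (simp add: local_counts(3))
  next
    case 6 then show ?case by (simp add: local_counts(3))
  next
    case 7 show ?case by (rule sbar_eq)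
  next
    case 8 show ?case by (rule Y2_triangle_free)
  next
    case 9 then show ?case by (rule Y2_edge_in_unique_A)
  next
    case 10 then show ?case by (rule Y2_edges_in_A_matching(1))
  next
    case 11 then show ?case by (rule Y2_edges_in_A_matching(2))
  next
    case 12 then show ?case by (elim conjE) (rule square_through_A_edges(1))
  next
    case 13 then show ?case by (elim conjE) (rule square_through_A_edges(2))
  qed
qed

end
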